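(* Let $\beta$ be a constant, $K$ a smooth positive function with antiderivative $J(u)=\int K(u)\,du$ assumed invertible, and $C(u)=\beta K(u)$. For arbitrary constants $C_0,C_1$, the functions $$u(z,t)=J^{-1}\!\left(\frac{C_0}{z\sqrt{t}}\exp\!\left(-\frac{\beta z^2}{4t}\right)\right)\qquad\text{and}\qquad u(z,t)=J^{-1}\!\left(\frac{C_1}{z}\right)$$ are solutions (for $z>0$, $t>0$, wherever the arguments lie in the range of $J$) of the equation $C(u)u_t=z^{-2}\left(K(u)z^{2}u_z\right)_z$. *)

theory Defs
  imports "HOL-Analysis.Analysis"
begin

definition pde_solution ::
  "(real \<Rightarrow> real) \<Rightarrow> (real \<Rightarrow> real) \<Rightarrow> (real \<Rightarrow> real \<Rightarrow> real) \<Rightarrow> (real \<times> real) set \<Rightarrow> bool"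
where
  "pde_solution C K u S \<longleftrightarrow>
     (\<forall>(z,t)\<in>S.
        (\<lambda>z'. u z' t) differentiable (at z) \<and>
        (\<lambda>t'. u z t') differentiable (at t) \<and>
        (\<lambda>z'. K (u z' t) * z'^2 * deriv (\<lambda>z''. u z'' t) z') differentiable (at z) \<and>
        C (u z t) * deriv (\<lambda>t'. u z t') t
          = (1 / z^2) * deriv (\<lambda>z'. K (u z' t) * z'^2 * deriv (\<lambda>z''. u z'' t) z') z)"

end

theory Submission
  imports Defs "HOL-Complex_Analysis.Conformal_Mappings"
begin

text \<open>Kirchhoff transformation: for \<open>w = J(u)\<close> we have \<open>K(u) u\<^sub>z = w\<^sub>z\<close> and \<open>K(u) u\<^sub>t = w\<^sub>t\<close>,
  so \<open>u = J\<^sup>-\<^sup>1(w)\<close> solves \<open>\<beta> K(u) u\<^sub>t = z\<^sup>-\<^sup>2 (K(u) z\<^sup>2 u\<^sub>z)\<^sub>z\<close> exactly when \<open>w\<close> solves the linear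
  equation \<open>\<beta> w\<^sub>t = z\<^sup>-\<^sup>2 (z\<^sup>2 w\<^sub>z)\<^sub>z\<close>, the radially symmetric heat equation in three dimensions.
  Its point-source solution \<open>C\<^sub>0 z\<^sup>-\<^sup>1 t\<^sup>-\<^sup>1\<^sup>/\<^sup>2 exp(-\<beta> z\<^sup>2/4t)\<close> and its stationary solution \<open>C\<^sub>1/z\<close>
  yield the two solutions. Since \<open>J' = K \<noteq> 0\<close>, \<open>J\<close> has an open range on which \<open>J\<^sup>-\<^sup>1\<close> is
  differentiable, which keeps the transformed solution differentiable near each point.\<close>

lemma pde_solutionI:
  assumes u_z: "\<And>z t. (z, t) \<in> S \<Longrightarrow> ((\<lambda>z'. u z' t) has_real_derivative u_z z t) (at z)"
      and u_t: "\<And>z t. (z, t) \<in> S \<Longrightarrow> ((\<lambda>t'. u z t') has_real_derivative u_t z t) (at t)"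
      and flux: "\<And>z t. (z, t) \<in> S \<Longrightarrow>
        ((\<lambda>z'. K (u z' t) * z'^2 * deriv (\<lambda>z''. u z'' t) z') has_real_derivative F z t) (at z)"
      and eq: "\<And>z t. (z, t) \<in> S \<Longrightarrow> C (u z t) * u_t z t = F z t / z^2"
  shows "pde_solution C K u S"
  unfolding pde_solution_def
proof (intro ballI, clarify, intro conjI)
  fix z t assume zt: "(z, t) \<in> S"
  show "(\<lambda>z'. u z' t) differentiable (at z)"
    using u_z[OF zt] real_differentiable_def by blast
  show "(\<lambda>t'. u z t') differentiable (at t)"
    using u_t[OF zt] real_differentiable_def by blast
  show "(\<lambda>z'. K (u z' t) * z'^2 * deriv (\<lambda>z''. u z'' t) z') differentiable (at z)"
    using flux[OF zt] real_differentiable_def by blast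
  show "C (u z t) * deriv (\<lambda>t'. u z t') t
      = 1 / z^2 * deriv (\<lambda>z'. K (u z' t) * z'^2 * deriv (\<lambda>z''. u z'' t) z') z"
    using eq[OF zt] by (simp add: DERIV_imp_deriv[OF u_t[OF zt]] DERIV_imp_deriv[OF flux[OF zt]])
qed

lemma pde_solutionD:
  assumes "pde_solution C K u S" and "(z, t) \<in> S"
  shows "((\<lambda>z'. u z' t) has_real_derivative deriv (\<lambda>z'. u z' t) z) (at z)"
    and "((\<lambda>t'. u z t') has_real_derivative deriv (\<lambda>t'. u z t') t) (at t)"
    and "((\<lambda>z'. K (u z' t) * z'^2 * deriv (\<lambda>z''. u z'' t) z') has_real_derivative
           deriv (\<lambda>z'. K (u z' t) * z'^2 * deriv (\<lambda>z''. u z'' t) z') z) (at z)"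
    and "C (u z t) * deriv (\<lambda>t'. u z t') t
           = deriv (\<lambda>z'. K (u z' t) * z'^2 * deriv (\<lambda>z''. u z'' t) z') z / z^2"
  using assms by (auto simp: pde_solution_def DERIV_deriv_iff_real_differentiable)

lemma eventually_Pair_in_open:
  assumes "open S" and "(z, t) \<in> S"
  shows "eventually (\<lambda>z'. (z', t) \<in> S) (nhds z)"
proof -
  have "open ((\<lambda>z'. (z', t)) -` S)"
    by (intro continuous_open_vimage assms(1) continuous_intros)
  then show ?thesis
    using eventually_nhds_in_open assms(2) by fastforce
qed

lemma pde_solution_linearI:
  assumes "open S"
      and w_z: "\<And>z t. (z, t) \<in> S \<Longrightarrow> ((\<lambda>z'. w z' t) has_real_derivative w_z z t) (at z)"
      and w_t: "\<And>z t. (z, t) \<in> S \<Longrightarrow> ((\<lambda>t'. w z t') has_real_derivative w_t z t) (at t)"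
      and flux: "\<And>z t. (z, t) \<in> S \<Longrightarrow> z^2 * w_z z t = G z t"
      and flux': "\<And>z t. (z, t) \<in> S \<Longrightarrow> ((\<lambda>z'. G z' t) has_real_derivative F z t) (at z)"
      and eq: "\<And>z t. (z, t) \<in> S \<Longrightarrow> \<beta> * w_t z t = F z t / z^2"
  shows "pde_solution (\<lambda>_. \<beta>) (\<lambda>_. 1) w S"
proof (rule pde_solutionI[OF w_z w_t _ eq])
  fix z t assume zt: "(z, t) \<in> S"
  have "eventually (\<lambda>z'. 1 * z'^2 * deriv (\<lambda>z''. w z'' t) z' = G z' t) (nhds z)"
    using eventually_Pair_in_open[OF \<open>open S\<close> zt]
    by eventually_elim (simp add: DERIV_imp_deriv[OF w_z] flux)
  then show "((\<lambda>z'. 1 * z'^2 * deriv (\<lambda>z''. w z'' t) z') has_real_derivative F z t) (at z)"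
    by (rule DERIV_cong_ev[OF refl _ refl, THEN iffD2, OF _ flux'[OF zt]])
qed

lemma has_real_derivative_inv_antiderivative:
  fixes J K :: "real \<Rightarrow> real"
  assumes J': "\<And>x. (J has_real_derivative K x) (at x)" and K: "\<And>x. K x \<noteq> 0"
      and "inj J" and "y \<in> range J"
  shows "(inv J has_real_derivative inverse (K (inv J y))) (at y)"
proof -
  obtain x where y: "y = J x" using \<open>y \<in> range J\<close> by auto
  have "continuous_on UNIV J"
    using J' by (meson DERIV_isCont continuous_at_imp_continuous_on)
  then have "(inv J has_real_derivative inverse (K x)) (at (J x))"
    by (intro has_field_derivative_inverse_strong[where S=UNIV]) (use J' K \<open>inj J\<close> in auto)
  then show ?thesis using y \<open>inj J\<close> by simp
qed

lemma pde_solution_Kirchhoff_transform: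
  fixes J K :: "real \<Rightarrow> real"
  assumes J': "\<And>x. (J has_real_derivative K x) (at x)" and K: "\<And>x. K x \<noteq> 0"
      and "inj J" and "open S" and lin: "pde_solution (\<lambda>_. \<beta>) (\<lambda>_. 1) w S"
  shows "pde_solution (\<lambda>x. \<beta> * K x) K (\<lambda>z t. inv J (w z t)) {(z, t). (z, t) \<in> S \<and> w z t \<in> range J}"
proof -
  have "open (range J)"
    using J' \<open>inj J\<close>
    by (intro injective_into_1d_imp_open_map_UNIV[where S=UNIV])
       (auto intro: DERIV_isCont continuous_at_imp_continuous_on)
  note w_z = pde_solutionD(1)[OF lin] and w_t = pde_solutionD(2)[OF lin]
  note inv_J' = has_real_derivative_inv_antiderivative[OF J' K \<open>inj J\<close>]
  have u_z: "((\<lambda>z'. inv J (w z' t)) has_real_derivative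
      deriv (\<lambda>z'. w z' t) z / K (inv J (w z t))) (at z)"
    if "(z, t) \<in> S" "w z t \<in> range J" for z t
    using DERIV_chain2[OF inv_J'[OF that(2)] w_z[OF that(1)]] by (simp add: field_simps)
  show ?thesis
  proof (rule pde_solutionI)
    fix z t assume "(z, t) \<in> {(z, t). (z, t) \<in> S \<and> w z t \<in> range J}"
    then have zt: "(z, t) \<in> S" and range: "w z t \<in> range J" by auto
    show "((\<lambda>z'. inv J (w z' t)) has_real_derivative
        deriv (\<lambda>z'. w z' t) z / K (inv J (w z t))) (at z)"
      using u_z[OF zt range] .
    show "((\<lambda>t'. inv J (w z t')) has_real_derivative
        deriv (\<lambda>t'. w z t') t / K (inv J (w z t))) (at t)"
      using DERIV_chain2[OF inv_J'[OF range] w_t[OF zt]] by (simp add: field_simps)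
    have "isCont (\<lambda>z'. w z' t) z"
      using w_z[OF zt] by (rule DERIV_isCont)
    then have "((\<lambda>z'. w z' t) \<longlongrightarrow> w z t) (nhds z)"
      using tendsto_at_iff_tendsto_nhds[of "\<lambda>z'. w z' t" z] by (simp add: isCont_def)
    then have "eventually (\<lambda>z'. w z' t \<in> range J) (nhds z)"
      using \<open>open (range J)\<close> range by (rule topological_tendstoD)
    then have "eventually (\<lambda>z'. K (inv J (w z' t)) * z'^2 * deriv (\<lambda>z''. inv J (w z'' t)) z'
        = 1 * z'^2 * deriv (\<lambda>z''. w z'' t) z') (nhds z)"
      using eventually_Pair_in_open[OF \<open>open S\<close> zt]
      by eventually_elim (simp add: DERIV_imp_deriv[OF u_z] K)
    then show "((\<lambda>z'. K (inv J (w z' t)) * z'^2 * deriv (\<lambda>z''. inv J (w z'' t)) z')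
        has_real_derivative deriv (\<lambda>z'. 1 * z'^2 * deriv (\<lambda>z''. w z'' t) z') z) (at z)"
      by (rule DERIV_cong_ev[OF refl _ refl, THEN iffD2, OF _ pde_solutionD(3)[OF lin zt]])
    show "\<beta> * K (inv J (w z t)) * (deriv (\<lambda>t'. w z t') t / K (inv J (w z t)))
        = deriv (\<lambda>z'. 1 * z'^2 * deriv (\<lambda>z''. w z'' t) z') z / z^2"
      using pde_solutionD(4)[OF lin zt] K by simp
  qed
qed

lemma open_positive_quadrant: "open {(z::real, t::real). z > 0 \<and> t > 0}"
  by (simp add: open_Collect_conj open_Collect_less case_prod_unfold continuous_intros)

lemma pde_solution_heat_kernel:
  "pde_solution (\<lambda>_. \<beta>) (\<lambda>_. 1) (\<lambda>z t. C0 / (z * sqrt t) * exp (- \<beta> * z^2 / (4 * t)))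
     {(z, t). z > 0 \<and> t > 0}"
proof (rule pde_solution_linearI[where
      w_z = "\<lambda>z t. C0 / (z * sqrt t) * exp (- \<beta> * z^2 / (4 * t)) * (- 1 / z - \<beta> * z / (2 * t))"
  and w_t = "\<lambda>z t. C0 / (z * sqrt t) * exp (- \<beta> * z^2 / (4 * t)) * (\<beta> * z^2 / (4 * t^2) - 1 / (2 * t))"
  and G = "\<lambda>z t. - C0 / sqrt t * exp (- \<beta> * z^2 / (4 * t)) * (1 + \<beta> * z^2 / (2 * t))"
  and F = "\<lambda>z t. C0 / (z * sqrt t) * exp (- \<beta> * z^2 / (4 * t)) * (\<beta> * z^2 / (2 * t)) * (\<beta> * z^2 / (2 * t) - 1)"])
  show "open {(z::real, t::real). z > 0 \<and> t > 0}"
    by (rule open_positive_quadrant)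
  fix z t :: real assume "(z, t) \<in> {(z, t). z > 0 \<and> t > 0}"
  then have "z > 0" "t > 0" by auto
  have sqrt_sqrt: "sqrt t * (sqrt t * x) = t * x" for x
    using \<open>t > 0\<close> by (simp add: mult.assoc[symmetric])
  show "((\<lambda>z'. C0 / (z' * sqrt t) * exp (- \<beta> * z'^2 / (4 * t))) has_real_derivative
      C0 / (z * sqrt t) * exp (- \<beta> * z^2 / (4 * t)) * (- 1 / z - \<beta> * z / (2 * t))) (at z)"
    using \<open>z > 0\<close> \<open>t > 0\<close>
    by (auto intro!: derivative_eq_intros simp: field_simps power2_eq_square sqrt_sqrt)
  show "((\<lambda>t'. C0 / (z * sqrt t') * exp (- \<beta> * z^2 / (4 * t'))) has_real_derivative
      C0 / (z * sqrt t) * exp (- \<beta> * z^2 / (4 * t)) * (\<beta> * z^2 / (4 * t^2) - 1 / (2 * t))) (at t)"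
    using \<open>z > 0\<close> \<open>t > 0\<close>
    by (auto intro!: derivative_eq_intros simp: field_simps power2_eq_square)
  show "z^2 * (C0 / (z * sqrt t) * exp (- \<beta> * z^2 / (4 * t)) * (- 1 / z - \<beta> * z / (2 * t)))
      = - C0 / sqrt t * exp (- \<beta> * z^2 / (4 * t)) * (1 + \<beta> * z^2 / (2 * t))"
    using \<open>z > 0\<close> \<open>t > 0\<close> by (simp add: field_simps power2_eq_square)
  show "((\<lambda>z'. - C0 / sqrt t * exp (- \<beta> * z'^2 / (4 * t)) * (1 + \<beta> * z'^2 / (2 * t)))
      has_real_derivative
      C0 / (z * sqrt t) * exp (- \<beta> * z^2 / (4 * t)) * (\<beta> * z^2 / (2 * t)) * (\<beta> * z^2 / (2 * t) - 1)) (at z)"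
    using \<open>z > 0\<close> \<open>t > 0\<close>
    by (auto intro!: derivative_eq_intros simp: field_simps power2_eq_square)
  show "\<beta> * (C0 / (z * sqrt t) * exp (- \<beta> * z^2 / (4 * t)) * (\<beta> * z^2 / (4 * t^2) - 1 / (2 * t)))
      = C0 / (z * sqrt t) * exp (- \<beta> * z^2 / (4 * t)) * (\<beta> * z^2 / (2 * t)) * (\<beta> * z^2 / (2 * t) - 1) / z^2"
    using \<open>z > 0\<close> \<open>t > 0\<close> by (simp add: field_simps power2_eq_square)
qed

lemma pde_solution_stationary:
  "pde_solution (\<lambda>_. \<beta>) (\<lambda>_. 1) (\<lambda>z t. C1 / z) {(z, t). z > 0 \<and> t > 0}"
proof (rule pde_solution_linearI[where w_z = "\<lambda>z t. - C1 / z^2" and w_t = "\<lambda>z t. 0" and G = "\<lambda>z t. - C1"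
    and F = "\<lambda>z t. 0"])
  show "open {(z::real, t::real). z > 0 \<and> t > 0}"
    by (rule open_positive_quadrant)
  fix z t :: real assume "(z, t) \<in> {(z, t). z > 0 \<and> t > 0}"
  then have "z > 0" by auto
  show "((\<lambda>z'. C1 / z') has_real_derivative - C1 / z^2) (at z)"
    using \<open>z > 0\<close> by (auto intro!: derivative_eq_intros simp: field_simps power2_eq_square)
  show "z^2 * (- C1 / z^2) = - C1"
    using \<open>z > 0\<close> by simp
  show "((\<lambda>z'. - C1) has_real_derivative 0) (at z)"
    by simp
  show "((\<lambda>t'. C1 / z) has_real_derivative 0) (at t)"
    by simp
  show "\<beta> * 0 = 0 / z^2"
    by simp
qed

theorem mainTheorem11:
  fixes \<beta> C0 C1 :: real and K J C :: "real \<Rightarrow> real"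
  assumes K_smooth: "\<forall>n x. ((deriv ^^ n) K) differentiable (at x)"
      and K_pos: "\<forall>x. K x > 0"
      and J_antideriv: "\<forall>x. (J has_real_derivative K x) (at x)"
      and J_inj: "inj J"
      and C_def: "C = (\<lambda>x. \<beta> * K x)"
  shows "pde_solution C K
           (\<lambda>z t. inv J (C0 / (z * sqrt t) * exp (- \<beta> * z^2 / (4 * t))))
           {(z, t). z > 0 \<and> t > 0 \<and> C0 / (z * sqrt t) * exp (- \<beta> * z^2 / (4 * t)) \<in> range J}
       \<and> pde_solution C K
           (\<lambda>z t. inv J (C1 / z))
           {(z, t). z > 0 \<and> t > 0 \<and> C1 / z \<in> range J}"
proof -
  note transform = pde_solution_Kirchhoff_transform[OF _ _ J_inj open_positive_quadrant]
  have J': "(J has_real_derivative K x) (at x)" and K: "K x \<noteq> 0" for x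
    using J_antideriv K_pos by (auto simp: less_imp_neq[symmetric])
  from transform[OF J' K pde_solution_heat_kernel] transform[OF J' K pde_solution_stationary]
  show ?thesis
    unfolding C_def by simp
qed

end
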